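(* Let $f\in\mathbb{R}[X_1,\dots,X_n]$ be a non-constant polynomial of degree $2d$ with $|\Omega|=1$. Then $f_*=f_{sos}=f_{gp}$.
   Context: $\mathbb{N}=\{0,1,2,\dots\}$. For $\alpha\in\mathbb{N}^n$ write $\underline{X}^\alpha=X_1^{\alpha_1}\cdots X_n^{\alpha_n}$, $|\alpha|=\sum_i\alpha_i$, and for $a\in\mathbb{R}^n$, $a^\alpha=\prod_i a_i^{\alpha_i}$ with $0^0=1$. For $f=\sum_\alpha f_\alpha\underline{X}^\alpha$ of degree $2d$: $f_0$ is the constant term, $f_{2d,i}$ the coefficient of $X_i^{2d}$, $\Omega=\{\alpha: f_\alpha\ne0\}\setminus\{\underline{0},2d\epsilon_1,\dots,2d\epsilon_n\}$, $\Delta=\{\alpha\in\Omega:\ f_\alpha<0\text{ or }\alpha_i\text{ odd for some }i\}$, $\Delta^{<2d}=\{\alpha\in\Delta:|\alpha|<2d\}$. Define $f_*=\inf\{f(x):x\in\mathbb{R}^n\}$, $f_{sos}=\sup\{r\in\mathbb{R}: f-r\text{ is a sum of squares of polynomials}\}$, and $f_{gp}=\sup$ of the set of $r\in\mathbb{R}$ for which there exist reals $a_{\alpha,i}\ge0$ ($\alpha\in\Delta$, $i=1,\dots,n$), with $a_{\alpha,i}=0$ iff $\alpha_i=0$, such that, with $a_\alpha=(a_{\alpha,1},\dots,a_{\alpha,n})$: (1) $(2d)^{2d}a_\alpha^\alpha=|f_\alpha|^{2d}\alpha^\alpha$ for each $\alpha\in\Delta$ with $|\alpha|=2d$; (2)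 $f_{2d,i}\ge\sum_{\alpha\in\Delta}a_{\alpha,i}$ for all $i$; (3) $f_0-r\ge\sum_{\alpha\in\Delta^{<2d}}(2d-|\alpha|)\big[\frac{|f_\alpha|^{2d}\alpha^\alpha}{(2d)^{2d}a_\alpha^\alpha}\big]^{1/(2d-|\alpha|)}$ (with $\sup\emptyset=-\infty$). *)

theory Defs
  imports "HOL-Analysis.Analysis" "HOL-Library.Poly_Mapping" "HOL-Library.Extended_Real"
begin

text \<open>Multivariate real polynomials in variables X_0,...,X_{n-1}, represented as finitely
  supported maps from exponent vectors (finitely supported nat => nat) to real coefficients.\<close>

type_synonym mpoly = "(nat \<Rightarrow>\<^sub>0 nat) \<Rightarrow>\<^sub>0 real"

definition in_vars :: "nat \<Rightarrow> mpoly \<Rightarrow> bool" where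
  "in_vars n f \<longleftrightarrow> (\<forall>\<alpha>\<in>Poly_Mapping.keys f. Poly_Mapping.keys \<alpha> \<subseteq> {..<n})"

definition mdeg :: "(nat \<Rightarrow>\<^sub>0 nat) \<Rightarrow> nat" where
  "mdeg \<alpha> = (\<Sum>i\<in>Poly_Mapping.keys \<alpha>. Poly_Mapping.lookup \<alpha> i)"

definition total_degree :: "mpoly \<Rightarrow> nat" where
  "total_degree f = (if f = 0 then 0 else Max (mdeg ` Poly_Mapping.keys f))"

definition meval :: "mpoly \<Rightarrow> (nat \<Rightarrow> real) \<Rightarrow> real" where
  "meval f x = (\<Sum>\<alpha>\<in>Poly_Mapping.keys f. Poly_Mapping.lookup f \<alpha> * (\<Prod>i\<in>Poly_Mapping.keys \<alpha>. x i ^ Poly_Mapping.lookup \<alpha> i))"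

definition mconst :: "real \<Rightarrow> mpoly" where
  "mconst r = Poly_Mapping.single 0 r"

definition f_star :: "nat \<Rightarrow> mpoly \<Rightarrow> ereal" where
  "f_star n f = Inf ((\<lambda>x. ereal (meval f x)) ` {x. \<forall>i\<ge>n. x i = 0})"

definition is_sos :: "nat \<Rightarrow> mpoly \<Rightarrow> bool" where
  "is_sos n p \<longleftrightarrow> (\<exists>qs. (\<forall>q\<in>set qs. in_vars n q) \<and> p = sum_list (map (\<lambda>q. q * q) qs))"

definition f_sos :: "nat \<Rightarrow> mpoly \<Rightarrow> ereal" where
  "f_sos n f = Sup (ereal ` {r. is_sos n (f - mconst r)})"

definition Omega :: "nat \<Rightarrow> nat \<Rightarrow> mpoly \<Rightarrow> (nat \<Rightarrow>\<^sub>0 nat) set" where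
  "Omega n d f = {\<alpha>\<in>Poly_Mapping.keys f. \<alpha> \<noteq> 0 \<and> (\<forall>i<n. \<alpha> \<noteq> Poly_Mapping.single i (2*d))}"

definition Delta :: "nat \<Rightarrow> nat \<Rightarrow> mpoly \<Rightarrow> (nat \<Rightarrow>\<^sub>0 nat) set" where
  "Delta n d f = {\<alpha>\<in>Omega n d f. Poly_Mapping.lookup f \<alpha> < 0 \<or> (\<exists>i. odd (Poly_Mapping.lookup \<alpha> i))}"

definition apow :: "nat \<Rightarrow> (nat \<Rightarrow> real) \<Rightarrow> (nat \<Rightarrow>\<^sub>0 nat) \<Rightarrow> real" where
  "apow n a \<alpha> = (\<Prod>i<n. a i ^ Poly_Mapping.lookup \<alpha> i)"

definition gp_feasible :: "nat \<Rightarrow> nat \<Rightarrow> mpoly \<Rightarrow> real \<Rightarrow> bool" where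
  "gp_feasible n d f r \<longleftrightarrow>
    (\<exists>a :: (nat \<Rightarrow>\<^sub>0 nat) \<Rightarrow> nat \<Rightarrow> real.
      (\<forall>\<alpha>\<in>Delta n d f. \<forall>i<n. a \<alpha> i \<ge> 0 \<and> (a \<alpha> i = 0 \<longleftrightarrow> Poly_Mapping.lookup \<alpha> i = 0)) \<and>
      (\<forall>\<alpha>\<in>Delta n d f. mdeg \<alpha> = 2*d \<longrightarrow>
          (real (2*d)) ^ (2*d) * apow n (a \<alpha>) \<alpha> =
          \<bar>Poly_Mapping.lookup f \<alpha>\<bar> ^ (2*d) * apow n (\<lambda>i. real (Poly_Mapping.lookup \<alpha> i)) \<alpha>) \<and>
      (\<forall>i<n. Poly_Mapping.lookup f (Poly_Mapping.single i (2*d)) \<ge> (\<Sum>\<alpha>\<in>Delta n d f. a \<alpha> i)) \<and>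
      Poly_Mapping.lookup f 0 - r \<ge> (\<Sum>\<alpha>\<in>{\<alpha>\<in>Delta n d f. mdeg \<alpha> < 2*d}.
          real (2*d - mdeg \<alpha>) *
          ((\<bar>Poly_Mapping.lookup f \<alpha>\<bar> ^ (2*d) * apow n (\<lambda>i. real (Poly_Mapping.lookup \<alpha> i)) \<alpha>) /
            ((real (2*d)) ^ (2*d) * apow n (a \<alpha>) \<alpha>)) powr (1 / real (2*d - mdeg \<alpha>))))"

definition f_gp :: "nat \<Rightarrow> nat \<Rightarrow> mpoly \<Rightarrow> ereal" where
  "f_gp n d f = Sup (ereal ` {r. gp_feasible n d f r})"

end

theory Submission
  imports Defs
begin

text \<open>With \<open>\<Omega> = {\<alpha>}\<close> the polynomial is \<open>f = f0 + f\<^sub>\<alpha> X\<^sup>\<alpha> + \<Sum>\<^sub>i c\<^sub>i X\<^sub>i\<^sup>2\<^sup>d\<close>. Since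
  \<open>f_sos \<le> f_*\<close> holds in general, it suffices to show \<open>f_* \<le> f_gp\<close> and \<open>f_gp \<le> f_sos\<close>.
  If \<open>\<alpha> \<notin> \<Delta>\<close>, the term \<open>f\<^sub>\<alpha> X\<^sup>\<alpha>\<close> is a positive multiple of a square and everything is
  decided by \<open>f0\<close> and the signs of the \<open>c\<^sub>i\<close>. If \<open>\<alpha> \<in> \<Delta>\<close>, flipping the signs of some variables
  makes \<open>f\<^sub>\<alpha> X\<^sup>\<alpha>\<close> negative, and a GP-feasible point is precisely the data of a weighted AM-GM
  inequality \<open>\<Sum>\<^sub>i g\<^sub>i t\<^sub>i\<^sup>2\<^sup>d \<ge> 2d \<Prod>\<^sub>i t\<^sub>i\<^bsup>g\<^sub>i\<^esup>\<close>, with an extra constant variable carrying the weight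
  \<open>2d - |\<alpha>|\<close>, that bounds \<open>f - r\<close> from below. Hurwitz's identity writes the AM-GM gap as a sum
  of squares, so \<open>f_gp \<le> f_sos\<close>. Conversely, evaluating \<open>f\<close> along the curve on which every pure
  term \<open>c\<^sub>i x\<^sub>i\<^sup>2\<^sup>d\<close> equals \<open>\<alpha>\<^sub>i T\<close> and optimising over \<open>T\<close> shows that every lower bound
  of \<open>f\<close> is GP-feasible, so \<open>f_* \<le> f_gp\<close>.\<close>

abbreviation lookup :: "('a \<Rightarrow>\<^sub>0 'b::zero) \<Rightarrow> 'a \<Rightarrow> 'b" where "lookup \<equiv> Poly_Mapping.lookup"
abbreviation keys :: "('a \<Rightarrow>\<^sub>0 'b::zero) \<Rightarrow> 'a set" where "keys \<equiv> Poly_Mapping.keys"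
abbreviation single :: "'a \<Rightarrow> 'b::zero \<Rightarrow> 'a \<Rightarrow>\<^sub>0 'b" where "single \<equiv> Poly_Mapping.single"

definition monom_eval :: "(nat \<Rightarrow>\<^sub>0 nat) \<Rightarrow> (nat \<Rightarrow> real) \<Rightarrow> real" where
  "monom_eval \<beta> x = (\<Prod>i\<in>keys \<beta>. x i ^ lookup \<beta> i)"

lemma monom_eval_eq_prod:
  assumes "finite S" "keys \<beta> \<subseteq> S"
  shows "monom_eval \<beta> x = (\<Prod>i\<in>S. x i ^ lookup \<beta> i)"
  unfolding monom_eval_def
  by (rule prod.mono_neutral_left) (use assms in \<open>auto simp: in_keys_iff\<close>)

lemma monom_eval_add: "monom_eval (\<beta> + \<gamma>) x = monom_eval \<beta> x * monom_eval \<gamma> x"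
proof -
  let ?S = "keys \<beta> \<union> keys \<gamma>"
  have "monom_eval (\<beta> + \<gamma>) x = (\<Prod>i\<in>?S. x i ^ lookup \<beta> i * x i ^ lookup \<gamma> i)"
    by (subst monom_eval_eq_prod[of ?S]) (auto dest: subsetD[OF keys_add] simp: lookup_add power_add)
  also have "\<dots> = monom_eval \<beta> x * monom_eval \<gamma> x"
    by (simp add: prod.distrib monom_eval_eq_prod[of ?S])
  finally show ?thesis .
qed

lemma monom_eval_zero [simp]: "monom_eval 0 x = 1"
  by (simp add: monom_eval_def)

lemma monom_eval_single: "monom_eval (single i k) x = x i ^ k"
  by (cases "k = 0") (simp_all add: monom_eval_def)

lemma meval_eq_sum:
  assumes "finite S" "keys p \<subseteq> S"
  shows "meval p x = (\<Sum>\<beta>\<in>S. lookup p \<beta> * monom_eval \<beta> x)"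
  unfolding meval_def monom_eval_def[symmetric]
  by (rule sum.mono_neutral_left) (use assms in \<open>auto simp: in_keys_iff\<close>)

lemma meval_add: "meval (p + q) x = meval p x + meval q x"
proof -
  let ?S = "keys p \<union> keys q"
  have "meval (p + q) x = (\<Sum>\<beta>\<in>?S. lookup (p + q) \<beta> * monom_eval \<beta> x)"
    by (rule meval_eq_sum) (auto dest: subsetD[OF keys_add])
  then show ?thesis
    by (simp add: lookup_add distrib_right sum.distrib meval_eq_sum[of ?S])
qed

lemma meval_uminus: "meval (- p) x = - meval p x"
  by (simp add: meval_def sum_negf)

lemma meval_diff: "meval (p - q) x = meval p x - meval q x"
  using meval_add[of p "- q" x] by (simp add: meval_uminus)

lemma meval_single: "meval (single \<beta> c) x = c * monom_eval \<beta> x"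
  by (subst meval_eq_sum[of "{\<beta>}"]) auto

lemma meval_zero [simp]: "meval 0 x = 0"
  by (simp add: meval_def)

lemma meval_sum: "meval (\<Sum>i\<in>A. p i) x = (\<Sum>i\<in>A. meval (p i) x)"
  by (induction A rule: infinite_finite_induct) (auto simp: meval_add)

lemma poly_mapping_eq_sum_single: "p = (\<Sum>\<beta>\<in>keys p. single \<beta> (lookup p \<beta>))"
  by (rule poly_mapping_eqI) (auto simp: lookup_sum lookup_single when_def in_keys_iff)

lemma meval_mult: "meval (p * q) x = meval p x * meval q x"
proof -
  have "p * q = (\<Sum>\<beta>\<in>keys p. \<Sum>\<gamma>\<in>keys q. single (\<beta> + \<gamma>) (lookup p \<beta> * lookup q \<gamma>))"
    by (subst poly_mapping_eq_sum_single[of p], subst poly_mapping_eq_sum_single[of q])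
       (simp add: sum_product mult_single)
  then have "meval (p * q) x =
      (\<Sum>\<beta>\<in>keys p. \<Sum>\<gamma>\<in>keys q. lookup p \<beta> * monom_eval \<beta> x * (lookup q \<gamma> * monom_eval \<gamma> x))"
    by (simp add: meval_sum meval_single monom_eval_add mult_ac)
  also have "\<dots> = meval p x * meval q x"
    by (simp add: meval_def monom_eval_def sum_product)
  finally show ?thesis .
qed

lemma meval_mconst [simp]: "meval (mconst c) x = c"
  by (simp add: mconst_def meval_single monom_eval_def)

lemma in_vars_single: "keys \<beta> \<subseteq> {..<n} \<Longrightarrow> in_vars n (single \<beta> c)"
  by (simp add: in_vars_def)

lemma in_vars_mconst [simp]: "in_vars n (mconst c)"
  by (simp add: in_vars_def mconst_def)

lemma in_vars_one [simp]: "in_vars n 1"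
  using in_vars_mconst[of n 1] by (simp add: mconst_def)

lemma in_vars_add: "in_vars n p \<Longrightarrow> in_vars n q \<Longrightarrow> in_vars n (p + q)"
  unfolding in_vars_def using keys_add[of p q] by (meson UnE subsetD)

lemma in_vars_uminus: "in_vars n p \<Longrightarrow> in_vars n (- p)"
  unfolding in_vars_def by (simp add: in_keys_iff)

lemma in_vars_diff: "in_vars n p \<Longrightarrow> in_vars n q \<Longrightarrow> in_vars n (p - q)"
  using in_vars_add[of n p "- q"] in_vars_uminus[of n q] by simp

lemma in_vars_mult: "in_vars n p \<Longrightarrow> in_vars n q \<Longrightarrow> in_vars n (p * q)"
proof -
  assume p: "in_vars n p" and q: "in_vars n q"
  show ?thesis unfolding in_vars_def
  proof
    fix \<gamma> assume "\<gamma> \<in> keys (p * q)"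
    then obtain a b where "\<gamma> = a + b" "a \<in> keys p" "b \<in> keys q" using keys_mult by blast
    with p q show "keys \<gamma> \<subseteq> {..<n}" using keys_add[of a b] unfolding in_vars_def by blast
  qed
qed

lemma in_vars_power: "in_vars n p \<Longrightarrow> in_vars n (p ^ k)"
  by (induction k) (simp_all add: in_vars_mult)

lemma in_vars_prod: "(\<And>i. i \<in> A \<Longrightarrow> in_vars n (p i)) \<Longrightarrow> in_vars n (\<Prod>i\<in>A. p i)"
  by (induction A rule: infinite_finite_induct) (simp_all add: in_vars_mult)

definition mvar :: "nat \<Rightarrow> mpoly" where
  "mvar i = single (single i 1) 1"

lemma in_vars_mvar: "i < n \<Longrightarrow> in_vars n (mvar i)"
  unfolding mvar_def by (rule in_vars_single) auto

lemma mvar_power: "mvar i ^ k = single (single i k) 1"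
  by (induction k) (simp_all add: mvar_def mult_single single_add[symmetric] add.commute)

lemma prod_mvar_power:
  assumes "keys \<alpha> \<subseteq> {..<n}"
  shows "(\<Prod>i<n. mvar i ^ lookup \<alpha> i) = single \<alpha> 1"
proof -
  have "(\<Sum>i<n. single i (lookup \<alpha> i)) = \<alpha>"
    using assms by (intro poly_mapping_eqI) (auto simp: lookup_sum lookup_single when_def in_keys_iff)
  moreover have "(\<Prod>i\<in>A. single (single i (g i)) (1::real)) = single (\<Sum>i\<in>A. single i (g i)) 1"
    for A and g :: "nat \<Rightarrow> nat"
    by (induction A rule: infinite_finite_induct) (simp_all add: mult_single)
  ultimately show ?thesis by (simp add: mvar_power)
qed

lemma mconst_mult: "mconst a * mconst b = mconst (a * b)"
  by (simp add: mconst_def mult_single)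

lemma mconst_add: "mconst a + mconst b = mconst (a + b)"
  by (simp add: mconst_def single_add)

lemma mconst_diff: "mconst a - mconst b = mconst (a - b)"
  by (simp add: mconst_def single_diff)

lemma mconst_power: "mconst a ^ k = mconst (a ^ k)"
  by (induction k) (simp_all add: mconst_mult, simp add: mconst_def)

lemma mconst_prod: "(\<Prod>i\<in>A. mconst (a i)) = mconst (\<Prod>i\<in>A. a i)"
  by (induction A rule: infinite_finite_induct) (simp_all add: mconst_mult, simp_all add: mconst_def)

lemma of_nat_eq_mconst: "(of_nat k :: mpoly) = mconst (real k)"
  unfolding mconst_def by (rule single_of_nat[symmetric])

lemma mconst_mult_single: "mconst c * single \<beta> 1 = single \<beta> c"
  by (simp add: mconst_def mult_single)

section \<open>Sums of squares\<close>

lemma is_sos_zero: "is_sos n 0"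
  unfolding is_sos_def by (rule exI[of _ "[]"]) simp

lemma is_sos_square: "in_vars n q \<Longrightarrow> is_sos n (q * q)"
  unfolding is_sos_def by (rule exI[of _ "[q]"]) simp

lemma is_sos_add: "is_sos n p \<Longrightarrow> is_sos n q \<Longrightarrow> is_sos n (p + q)"
  unfolding is_sos_def
proof (elim exE conjE)
  fix ps qs assume "\<forall>q\<in>set ps. in_vars n q" "p = sum_list (map (\<lambda>q. q * q) ps)"
    "\<forall>q\<in>set qs. in_vars n q" "q = sum_list (map (\<lambda>q. q * q) qs)"
  then show "\<exists>qs. (\<forall>q\<in>set qs. in_vars n q) \<and> p + q = sum_list (map (\<lambda>q. q * q) qs)"
    by (intro exI[of _ "ps @ qs"]) auto
qed

lemma is_sos_sum: "(\<And>i. i \<in> A \<Longrightarrow> is_sos n (p i)) \<Longrightarrow> is_sos n (\<Sum>i\<in>A. p i)"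
  by (induction A rule: infinite_finite_induct) (auto intro: is_sos_add is_sos_zero)

lemma is_sos_mult_square: "in_vars n w \<Longrightarrow> is_sos n p \<Longrightarrow> is_sos n (w * w * p)"
  unfolding is_sos_def
proof (elim exE conjE)
  fix ps assume "in_vars n w" "\<forall>q\<in>set ps. in_vars n q" "p = sum_list (map (\<lambda>q. q * q) ps)"
  then show "\<exists>qs. (\<forall>q\<in>set qs. in_vars n q) \<and> w * w * p = sum_list (map (\<lambda>q. q * q) qs)"
    by (intro exI[of _ "map (\<lambda>q. w * q) ps"])
       (simp add: in_vars_mult sum_list_const_mult[symmetric] o_def mult_ac)
qed

lemma is_sos_mconst_mult: "c \<ge> 0 \<Longrightarrow> is_sos n p \<Longrightarrow> is_sos n (mconst c * p)"
  using is_sos_mult_square[of n "mconst (sqrt c)" p] by (simp add: mconst_mult)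

lemma is_sos_mconst: "c \<ge> 0 \<Longrightarrow> is_sos n (mconst c)"
  using is_sos_mconst_mult[of c n 1] is_sos_square[of n 1] by simp

lemma is_sos_of_nat_mult: "is_sos n p \<Longrightarrow> is_sos n (of_nat k * p)"
  by (simp add: of_nat_eq_mconst is_sos_mconst_mult)

lemma is_sos_of_nat_mult_cancel:
  assumes "k > 0" "is_sos n (of_nat k * p)"
  shows "is_sos n p"
proof -
  have "is_sos n (mconst (1 / real k) * (of_nat k * p))"
    using assms(2) by (rule is_sos_mconst_mult[rotated]) simp
  moreover have "mconst (1 / real k) * (of_nat k * p) = p"
    using assms(1) by (simp add: of_nat_eq_mconst mult.assoc[symmetric] mconst_mult, simp add: mconst_def)
  ultimately show ?thesis by metis
qed

lemma is_sos_meval_nonneg: "is_sos n p \<Longrightarrow> meval p x \<ge> 0"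
proof -
  have "meval (sum_list (map (\<lambda>q. q * q) qs)) x \<ge> 0" for qs :: "mpoly list"
    by (induction qs) (simp_all add: meval_add meval_mult)
  then show "is_sos n p \<Longrightarrow> meval p x \<ge> 0"
    unfolding is_sos_def by blast
qed

lemma is_sos_mconst_mult_even_power: "c \<ge> 0 \<Longrightarrow> in_vars n p \<Longrightarrow> is_sos n (mconst c * p ^ (2 * k))"
  unfolding mult_2 power_add by (intro is_sos_mconst_mult is_sos_square in_vars_power)

section \<open>Sum-of-squares certificates for the AM-GM inequality\<close>

definition amgm_gap :: "'a set \<Rightarrow> ('a \<Rightarrow> nat) \<Rightarrow> ('a \<Rightarrow> 'b::comm_ring_1) \<Rightarrow> nat \<Rightarrow> 'b" where
  "amgm_gap I g t N = (\<Sum>i\<in>I. of_nat (g i) * t i ^ N) - of_nat N * (\<Prod>i\<in>I. t i ^ g i)"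

lemma is_sos_amgm_gap_two:
  assumes "in_vars n a" "in_vars n b"
  shows "is_sos n (of_nat N * (a * a) ^ (N + 1) - of_nat (N + 1) * (a * a) ^ N * (b * b) + (b * b) ^ (N + 1))"
proof (induction N)
  case 0
  then show ?case by (simp add: is_sos_zero)
next
  case (Suc N)
  \<comment> \<open>With \<open>s = a\<^sup>2\<close>, \<open>u = b\<^sup>2\<close>: the gap for \<open>N + 1\<close> is \<open>u\<close> times the gap for \<open>N\<close> plus \<open>(N + 1) s\<^sup>N (s - u)\<^sup>2\<close>.\<close>
  have "of_nat (Suc N) * (a * a) ^ (Suc N + 1) - of_nat (Suc N + 1) * (a * a) ^ Suc N * (b * b) + (b * b) ^ (Suc N + 1)
      = b * b * (of_nat N * (a * a) ^ (N + 1) - of_nat (N + 1) * (a * a) ^ N * (b * b) + (b * b) ^ (N + 1))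
        + of_nat (N + 1) * ((a ^ N * (a * a - b * b)) * (a ^ N * (a * a - b * b)))"
    by (simp add: power_mult_distrib algebra_simps)
  then show ?case
    by (metis Suc assms is_sos_add is_sos_mult_square is_sos_of_nat_mult is_sos_square
        in_vars_mult in_vars_power in_vars_diff)
qed

lemma amgm_gap_unit_weight:
  assumes "finite I" "j \<in> I" "\<forall>i\<in>I. g i = (if i = j then 1 else 0)"
  shows "amgm_gap I g t 1 = 0"
proof -
  have "(\<Sum>i\<in>I. of_nat (g i) * t i ^ 1) = (\<Sum>i\<in>I. if i = j then t i else 0)"
    "(\<Prod>i\<in>I. t i ^ g i) = (\<Prod>i\<in>I. if i = j then t i else 1)"
    using assms(3) by (auto intro!: sum.cong prod.cong)
  then show ?thesis
    using assms(1,2) by (simp add: amgm_gap_def)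
qed

text \<open>Hurwitz's induction step: moving one unit of weight onto \<open>t\<^sub>j\<close> raises the degree by one, at the
  cost of two-variable gaps between each \<open>t\<^sub>i\<close> and \<open>t\<^sub>j\<close>.\<close>

lemma amgm_gap_Suc:
  fixes t :: "'a \<Rightarrow> 'b::comm_ring_1"
  assumes I: "finite I" and j: "j \<in> I" and h: "sum h I = M"
  defines "g \<equiv> \<lambda>i. h i + (if i = j then 1 else 0)"
  shows "of_nat M * amgm_gap I g t (Suc M) = of_nat (M + 1) * t j * amgm_gap I h t M
    + (\<Sum>i\<in>I. of_nat (h i) * (of_nat M * t i ^ (M + 1) - of_nat (M + 1) * t i ^ M * t j + t j ^ (M + 1)))"
proof -
  have sum_g: "(\<Sum>i\<in>I. of_nat (g i) * t i ^ K) = (\<Sum>i\<in>I. of_nat (h i) * t i ^ K) + t j ^ K" for K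
  proof -
    have "(\<Sum>i\<in>I. of_nat (if i = j then 1 else 0) * t i ^ K) = (\<Sum>i\<in>I. if i = j then t i ^ K else 0)"
      by (intro sum.cong) auto
    then show ?thesis
      using I j by (simp add: g_def distrib_right sum.distrib)
  qed
  have prod_g: "(\<Prod>i\<in>I. t i ^ g i) = t j * (\<Prod>i\<in>I. t i ^ h i)"
  proof -
    have "(\<Prod>i\<in>I. t i ^ (if i = j then 1 else 0)) = (\<Prod>i\<in>I. if i = j then t i else 1)"
      by (intro prod.cong) auto
    then show ?thesis
      using I j by (simp add: g_def power_add prod.distrib)
  qed
  have "(\<Sum>i\<in>I. of_nat (h i) * (of_nat M * t i ^ (M + 1) - of_nat (M + 1) * t i ^ M * t j + t j ^ (M + 1))) =
      of_nat M * (\<Sum>i\<in>I. of_nat (h i) * t i ^ Suc M)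
      - of_nat (M + 1) * t j * (\<Sum>i\<in>I. of_nat (h i) * t i ^ M)
      + (\<Sum>i\<in>I. of_nat (h i)) * t j ^ Suc M"
    by (simp add: algebra_simps sum.distrib sum_subtractf sum_distrib_left sum_distrib_right)
  also have "(\<Sum>i\<in>I. of_nat (h i)) = (of_nat M :: 'b)"
    using h by (simp flip: of_nat_sum)
  finally show ?thesis
    unfolding amgm_gap_def sum_g prod_g by (simp add: algebra_simps)
qed

lemma is_sos_amgm_gap_squares:
  assumes I: "finite I" and w: "\<And>i. i \<in> I \<Longrightarrow> in_vars n (w i)" and "sum g I = N"
  shows "is_sos n (amgm_gap I g (\<lambda>i. w i * w i) N)"
  using assms(3)
proof (induction N arbitrary: g)
  case 0
  then show ?case using I by (simp add: amgm_gap_def is_sos_zero)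
next
  case (Suc M)
  define t where "t = (\<lambda>i. w i * w i)"
  obtain j where j: "j \<in> I" "g j > 0"
    using Suc.prems by (metis Zero_neq_Suc sum.neutral neq0_conv)
  define h where "h = g(j := g j - 1)"
  have g_eq: "g = (\<lambda>i. h i + (if i = j then 1 else 0))"
    using j by (auto simp: h_def)
  have sum_h: "sum h I = M"
    using Suc.prems I j by (simp add: g_eq sum.distrib)
  show ?case
  proof (cases "M = 0")
    case True
    then have "\<forall>i\<in>I. g i = (if i = j then 1 else 0)"
      using sum_h I by (simp add: g_eq)
    then have "amgm_gap I g (\<lambda>i. w i * w i) 1 = 0"
      by (rule amgm_gap_unit_weight[OF I j(1)])
    then show ?thesis
      using True by (simp add: is_sos_zero)
  next
    case False
    have "is_sos n (of_nat M * amgm_gap I g t (Suc M))"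
      unfolding g_eq amgm_gap_Suc[OF I j(1) sum_h]
    proof (rule is_sos_add)
      show "is_sos n (of_nat (M + 1) * t j * amgm_gap I h t M)"
        using is_sos_of_nat_mult[OF is_sos_mult_square[OF w[OF j(1)] Suc.IH[OF sum_h]], of "M + 1"]
        by (simp add: t_def mult_ac)
      have "is_sos n (of_nat M * t i ^ (M + 1) - of_nat (M + 1) * t i ^ M * t j + t j ^ (M + 1))"
        if "i \<in> I" for i
        unfolding t_def by (intro is_sos_amgm_gap_two w j that)
      then show "is_sos n (\<Sum>i\<in>I. of_nat (h i) *
          (of_nat M * t i ^ (M + 1) - of_nat (M + 1) * t i ^ M * t j + t j ^ (M + 1)))"
        by (blast intro: is_sos_sum is_sos_of_nat_mult)
    qed
    then have "is_sos n (amgm_gap I g t (Suc M))"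
      by (rule is_sos_of_nat_mult_cancel[rotated]) (use False in simp)
    then show ?thesis
      by (simp add: t_def)
  qed
qed

lemma exists_bounded_summands:
  fixes g :: "'a \<Rightarrow> nat"
  assumes "finite I" "k \<le> sum g I"
  shows "\<exists>u. (\<forall>i. u i \<le> g i) \<and> sum u I = k"
  using assms(2)
proof (induction k)
  case 0
  then show ?case by (intro exI[of _ "\<lambda>_. 0"]) simp
next
  case (Suc k)
  then obtain u where u: "\<forall>i. u i \<le> g i" "sum u I = k" by auto
  have "\<exists>j\<in>I. u j < g j"
  proof (rule ccontr)
    assume "\<not> ?thesis"
    then have "sum u I = sum g I" using u by (intro sum.cong) (auto simp: not_less intro: antisym)
    then show False using Suc.prems u by simp
  qed
  then obtain j where j: "j \<in> I" "u j < g j" by auto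
  define u' where "u' i = u i + (if i = j then 1 else 0)" for i
  have "sum u' I = Suc k"
    using assms(1) j u by (simp add: u'_def sum.distrib)
  moreover have "\<forall>i. u' i \<le> g i"
    using u j by (auto simp: u'_def Suc_le_eq)
  ultimately show ?case by blast
qed

text \<open>Splitting the weights into two halves of total \<open>d\<close> and completing the square turns the
  certificate for squares into one for arbitrary polynomials in even degree.\<close>

lemma is_sos_amgm_gap:
  assumes I: "finite I" and t: "\<And>i. i \<in> I \<Longrightarrow> in_vars n (t i)" and g: "sum g I = 2 * d"
  shows "is_sos n (amgm_gap I g t (2 * d))"
proof -
  obtain u where u: "\<forall>i. u i \<le> g i" "sum u I = d"
    using exists_bounded_summands[OF I, of d g] g by auto
  define v where "v i = g i - u i" for i
  have g_eq: "g i = u i + v i" for i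
    using u by (simp add: v_def)
  have sum_v: "sum v I = d"
    using g u by (simp add: v_def sum_subtractf_nat)
  define P where "P = (\<Prod>i\<in>I. t i ^ u i)"
  define Q where "Q = (\<Prod>i\<in>I. t i ^ v i)"
  have sum_g: "(\<Sum>i\<in>I. of_nat (g i) * t i ^ (2 * d)) =
      (\<Sum>i\<in>I. of_nat (u i) * (t i * t i) ^ d) + (\<Sum>i\<in>I. of_nat (v i) * (t i * t i) ^ d)"
  proof -
    have "t i ^ (2 * d) = (t i * t i) ^ d" for i
      by (simp add: power_mult_distrib mult_2 power_add)
    then show ?thesis
      by (simp add: g_eq distrib_right sum.distrib)
  qed
  have prod_g: "(\<Prod>i\<in>I. t i ^ g i) = P * Q"
    by (simp add: P_def Q_def g_eq power_add prod.distrib)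
  have "(\<Prod>i\<in>I. (t i * t i) ^ u i) = P * P" "(\<Prod>i\<in>I. (t i * t i) ^ v i) = Q * Q"
    by (simp_all add: P_def Q_def power_mult_distrib prod.distrib)
  then have gap_eq: "amgm_gap I g t (2 * d) =
      amgm_gap I u (\<lambda>i. t i * t i) d + amgm_gap I v (\<lambda>i. t i * t i) d + of_nat d * ((P - Q) * (P - Q))"
    unfolding amgm_gap_def sum_g prod_g by (simp add: algebra_simps)
  have "in_vars n (P - Q)"
    by (auto simp: P_def Q_def intro!: in_vars_diff in_vars_prod in_vars_power t)
  then show ?thesis
    unfolding gap_eq by (intro is_sos_add is_sos_of_nat_mult is_sos_square is_sos_amgm_gap_squares[OF I] t u(2) sum_v)
qed

lemma amgm_gap_scaled_vars:
  fixes n k N :: nat and s :: "nat \<Rightarrow> real" and s0 :: real and e :: "nat \<Rightarrow> nat"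
  defines "t \<equiv> \<lambda>i. if i < n then mconst (s i) * mvar i else mconst s0"
    and "g \<equiv> \<lambda>i. if i < n then e i else k"
  shows "amgm_gap {..n} g t N =
    (\<Sum>i<n. mconst (real (e i) * s i ^ N) * mvar i ^ N) + mconst (real k * s0 ^ N)
    - mconst (real N * s0 ^ k * (\<Prod>i<n. s i ^ e i)) * (\<Prod>i<n. mvar i ^ e i)"
proof -
  have split: "{..n} = insert n {..<n}" by auto
  have "(\<Sum>i\<le>n. of_nat (g i) * t i ^ N) =
      (\<Sum>i<n. mconst (real (e i) * s i ^ N) * mvar i ^ N) + mconst (real k * s0 ^ N)"
    by (simp add: split t_def g_def power_mult_distrib mconst_power of_nat_eq_mconst mult.assoc
        mconst_mult[symmetric] add.commute)
  moreover have "(\<Prod>i\<le>n. t i ^ g i) = mconst (s0 ^ k * (\<Prod>i<n. s i ^ e i)) * (\<Prod>i<n. mvar i ^ e i)"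
    by (simp add: split t_def g_def power_mult_distrib mconst_power prod.distrib mconst_prod
        mconst_mult[symmetric] mult.assoc)
  ultimately show ?thesis
    by (simp add: amgm_gap_def of_nat_eq_mconst mconst_mult[symmetric] mult.assoc)
qed

section \<open>Lower bounds and the optimal values\<close>

definition lower_bound :: "nat \<Rightarrow> mpoly \<Rightarrow> real \<Rightarrow> bool" where
  "lower_bound n f r \<longleftrightarrow> (\<forall>x. (\<forall>i\<ge>n. x i = 0) \<longrightarrow> r \<le> meval f x)"

lemma f_sos_le_f_star: "f_sos n f \<le> f_star n f"
  unfolding f_sos_def f_star_def
proof (rule Sup_least, rule Inf_greatest)
  fix y z
  assume "y \<in> ereal ` {r. is_sos n (f - mconst r)}" and "z \<in> (\<lambda>x. ereal (meval f x)) ` {x. \<forall>i\<ge>n. x i = 0}"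
  then obtain r x where "y = ereal r" "is_sos n (f - mconst r)" "z = ereal (meval f x)"
    by auto
  then show "y \<le> z"
    using is_sos_meval_nonneg[of n "f - mconst r" x] by (simp add: meval_diff)
qed

lemma f_star_le_if_lower_bounds:
  assumes "\<And>r. lower_bound n f r \<Longrightarrow> ereal r \<le> F"
  shows "f_star n f \<le> F"
proof (cases "f_star n f")
  case (real m)
  have "f_star n f \<le> ereal (meval f x)" if "\<forall>i\<ge>n. x i = 0" for x
    unfolding f_star_def using that by (intro Inf_lower) auto
  then have "lower_bound n f m"
    using real by (simp add: lower_bound_def)
  then show ?thesis using assms real by simp
next
  case PInf
  moreover have "f_star n f \<le> ereal (meval f (\<lambda>_. 0))"
    unfolding f_star_def by (intro Inf_lower) auto
  ultimately show ?thesis by simp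
qed simp

lemma ex_ge_one_leading_term_neg:
  fixes c K :: real
  assumes "c < 0" "K \<ge> 0" "N \<ge> 1"
  shows "\<exists>t\<ge>1. c * t ^ N + K * t ^ (N - 1) < 0"
proof -
  define t where "t = K / (- c) + 1"
  have "t \<ge> 1" using assms by (simp add: t_def divide_nonneg_neg)
  moreover have "c * t ^ N + K * t ^ (N - 1) = t ^ (N - 1) * c"
  proof -
    have "c * t + K = c" using assms by (simp add: t_def field_simps)
    moreover have "c * t ^ N + K * t ^ (N - 1) = t ^ (N - 1) * (c * t + K)"
      using assms(3) by (cases N) (auto simp: algebra_simps)
    ultimately show ?thesis by simp
  qed
  ultimately show ?thesis using assms(1) by (intro exI[of _ t]) (simp add: mult_pos_neg)
qed

lemma root_powr_power:
  fixes x :: real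
  assumes "x \<ge> 0" "N > 0"
  shows "(x powr (1 / real N)) ^ N = x"
  using assms by (cases "x = 0") (simp_all add: powr_power)

lemma root_powr_pair:
  fixes R :: real
  assumes "R > 0" "k > 0" "D > 0"
  obtains s where "s \<ge> 0" "s ^ D = R powr (1 / real k)" "(s ^ k) ^ D = R"
proof
  let ?s = "(R powr (1 / real k)) powr (1 / real D)"
  show "?s ^ D = R powr (1 / real k)"
    using assms by (intro root_powr_power) auto
  then show "(?s ^ k) ^ D = R"
    using assms by (simp add: power_mult[symmetric] mult.commute[of k] power_mult root_powr_power)
qed simp

lemma sum_singleton_filter: "(\<Sum>\<beta>\<in>{\<beta>\<in>{a}. P \<beta>}. g \<beta>) = (if P a then g a else 0)"
  by (cases "P a") (simp_all add: Collect_conv_if)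

section \<open>Polynomials with a single non-extremal term\<close>

locale single_term_poly =
  fixes n d :: nat and f :: mpoly and \<alpha> :: "nat \<Rightarrow>\<^sub>0 nat"
  assumes in_vars_f: "in_vars n f" and total_degree_f: "total_degree f = 2 * d" and d_pos: "d \<ge> 1"
    and Omega_eq: "Omega n d f = {\<alpha>}"
begin

definition "f0 = lookup f 0"
definition "c i = lookup f (single i (2 * d))"
definition "b = lookup f \<alpha>"

abbreviation "alpha_pow \<equiv> apow n (\<lambda>i. real (lookup \<alpha> i)) \<alpha>"

lemma alpha_in_keys: "\<alpha> \<in> keys f" and alpha_nonzero: "\<alpha> \<noteq> 0"
  and alpha_ne_pure: "i < n \<Longrightarrow> \<alpha> \<noteq> single i (2 * d)"
  using Omega_eq unfolding Omega_def by blast+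

lemma b_nonzero: "b \<noteq> 0"
  using alpha_in_keys by (simp add: b_def in_keys_iff)

lemma keys_alpha: "keys \<alpha> \<subseteq> {..<n}"
  using in_vars_f alpha_in_keys by (auto simp: in_vars_def)

lemma mdeg_alpha_eq_sum: "mdeg \<alpha> = (\<Sum>i<n. lookup \<alpha> i)"
  unfolding mdeg_def by (rule sum.mono_neutral_left) (use keys_alpha in \<open>auto simp: in_keys_iff\<close>)

lemma mdeg_alpha_le: "mdeg \<alpha> \<le> 2 * d"
proof -
  have "f \<noteq> 0" using alpha_in_keys by auto
  then have "total_degree f = Max (mdeg ` keys f)" by (simp add: total_degree_def)
  moreover have "mdeg \<alpha> \<le> Max (mdeg ` keys f)" using alpha_in_keys by (intro Max_ge) auto
  ultimately show ?thesis using total_degree_f by simp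
qed

lemma alpha_pow_pos: "alpha_pow > 0"
  unfolding apow_def by (intro prod_pos) (auto simp: zero_power)

lemma single_pure_nonzero: "single (i::nat) (2 * d) \<noteq> 0"
proof
  assume "single i (2 * d) = 0"
  then have "lookup (single i (2 * d)) i = lookup 0 i" by simp
  then show False using d_pos by simp
qed

lemma inj_on_single_pure: "inj_on (\<lambda>i. single i (2 * d)) A"
  using d_pos by (intro inj_onI) (metis lookup_single_eq lookup_single_not_eq mult_is_0 not_one_le_zero zero_neq_numeral)

lemma f_eq_sum_single:
  "f = single 0 f0 + single \<alpha> b + (\<Sum>i<n. single (single i (2 * d)) (c i))"
proof -
  let ?P = "(\<lambda>i. single i (2 * d)) ` {..<n}"
  have "keys f \<subseteq> insert 0 (insert \<alpha> ?P)"
    using Omega_eq unfolding Omega_def by blast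
  then have "f = (\<Sum>\<beta>\<in>insert 0 (insert \<alpha> ?P). single \<beta> (lookup f \<beta>))"
    by (subst poly_mapping_eq_sum_single, intro sum.mono_neutral_left) (auto simp: in_keys_iff)
  moreover have "0 \<notin> insert \<alpha> ?P" "\<alpha> \<notin> ?P"
    using alpha_nonzero alpha_ne_pure single_pure_nonzero by auto
  ultimately show ?thesis
    by (simp add: sum.reindex inj_on_single_pure f0_def b_def c_def add.assoc)
qed

lemma f_eq_mvars:
  "f = mconst f0 + mconst b * (\<Prod>i<n. mvar i ^ lookup \<alpha> i) + (\<Sum>i<n. mconst (c i) * mvar i ^ (2 * d))"
  unfolding prod_mvar_power[OF keys_alpha]
  by (subst f_eq_sum_single) (simp add: mvar_power mconst_mult_single, simp add: mconst_def)

lemma meval_f: "meval f x = f0 + b * (\<Prod>i<n. x i ^ lookup \<alpha> i) + (\<Sum>i<n. c i * x i ^ (2 * d))"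
  by (subst f_eq_sum_single) (simp add: meval_add meval_sum meval_single monom_eval_single
      monom_eval_eq_prod[OF _ keys_alpha])


definition "alpha_in_Delta \<longleftrightarrow> b < 0 \<or> (\<exists>i. odd (lookup \<alpha> i))"

lemma Delta_eq: "Delta n d f = (if alpha_in_Delta then {\<alpha>} else {})"
  using Omega_eq unfolding Delta_def alpha_in_Delta_def b_def by auto

definition gp_ratio :: "(nat \<Rightarrow> real) \<Rightarrow> real" where
  "gp_ratio A = \<bar>b\<bar> ^ (2 * d) * alpha_pow / (real (2 * d) ^ (2 * d) * apow n A \<alpha>)"

lemma sign_vector:
  assumes alpha_in_Delta
  obtains \<epsilon> :: "nat \<Rightarrow> real"
  where "\<And>j. \<epsilon> j = 1 \<or> \<epsilon> j = -1" "b * (\<Prod>j<n. \<epsilon> j ^ lookup \<alpha> j) = - \<bar>b\<bar>"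
proof (cases "b < 0")
  case True
  then show ?thesis by (intro that[of "\<lambda>_. 1"]) simp_all
next
  case False
  then obtain i where i: "odd (lookup \<alpha> i)"
    using assms by (auto simp: alpha_in_Delta_def)
  then have "i < n"
    using keys_alpha by (metis in_keys_iff lessThan_iff odd_pos neq0_conv subsetD)
  have "(\<Prod>j<n. (if j = i then -1 else 1 :: real) ^ lookup \<alpha> j) = (\<Prod>j<n. if j = i then (-1) ^ lookup \<alpha> i else 1)"
    by (rule prod.cong) auto
  also have "\<dots> = -1"
    using \<open>i < n\<close> i by (simp add: prod.delta)
  finally show ?thesis
    using False b_nonzero by (intro that[of "\<lambda>j. if j = i then -1 else 1"]) auto
qed

lemma meval_f_signed:
  assumes \<epsilon>: "\<And>j. \<epsilon> j = 1 \<or> \<epsilon> j = (-1::real)" and b\<epsilon>: "b * (\<Prod>j<n. \<epsilon> j ^ lookup \<alpha> j) = - \<bar>b\<bar>"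
  shows "meval f (\<lambda>j. if j < n then \<epsilon> j * y j else 0) =
    f0 - \<bar>b\<bar> * (\<Prod>j<n. y j ^ lookup \<alpha> j) + (\<Sum>j<n. c j * y j ^ (2 * d))"
proof -
  let ?x = "\<lambda>j. if j < n then \<epsilon> j * y j else 0"
  have "(\<epsilon> j * y j) ^ (2 * d) = y j ^ (2 * d)" for j
    using \<epsilon>[of j] by (auto simp: power_mult_distrib power_mult)
  then have "(\<Sum>j<n. c j * ?x j ^ (2 * d)) = (\<Sum>j<n. c j * y j ^ (2 * d))"
    by (intro sum.cong) auto
  moreover have "b * (\<Prod>j<n. ?x j ^ lookup \<alpha> j) = - \<bar>b\<bar> * (\<Prod>j<n. y j ^ lookup \<alpha> j)"
    using b\<epsilon> by (simp add: power_mult_distrib prod.distrib mult.assoc[symmetric])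
  ultimately show ?thesis
    by (simp add: meval_f)
qed

lemma lower_bound_le_f0:
  assumes "lower_bound n f r"
  shows "r \<le> f0"
proof -
  obtain i where i: "i \<in> keys \<alpha>"
    using alpha_nonzero by (metis all_not_in_conv keys_eq_empty)
  moreover have "i < n"
    using i keys_alpha by auto
  ultimately have monom_zero: "(\<Prod>j<n. 0 ^ lookup \<alpha> j :: real) = 0"
    by (intro prod_zero) (auto simp: in_keys_iff intro!: bexI[of _ i])
  have "meval f (\<lambda>_. 0) = f0"
    using d_pos by (simp add: meval_f monom_zero zero_power)
  then show ?thesis
    using assms by (auto simp: lower_bound_def)
qed

text \<open>On the \<open>i\<close>-th coordinate axis the monomial \<open>X\<^sup>\<alpha>\<close> has degree below \<open>2 d\<close>, because \<open>\<alpha> \<noteq> 2 d e\<^sub>i\<close>.\<close>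

lemma monomial_on_axis_le:
  fixes t :: real
  assumes i: "i < n" and t: "t \<ge> 1"
  shows "\<bar>\<Prod>j<n. (if j = i then t else 0) ^ lookup \<alpha> j\<bar> \<le> t ^ (2 * d - 1)"
proof (cases "\<exists>j<n. j \<noteq> i \<and> lookup \<alpha> j > 0")
  case True
  then obtain j where "j < n" "j \<noteq> i" "lookup \<alpha> j > 0" by blast
  then have "(\<Prod>j<n. (if j = i then t else 0) ^ lookup \<alpha> j) = 0"
    by (subst prod_zero_iff) (auto intro!: bexI[of _ j])
  then show ?thesis using t by (simp only: abs_zero zero_le_power)
next
  case False
  then have "(\<Prod>j<n. (if j = i then t else 0) ^ lookup \<alpha> j) = (\<Prod>j<n. if j = i then t ^ lookup \<alpha> i else 1)"
    by (intro prod.cong) auto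
  then have monom: "(\<Prod>j<n. (if j = i then t else 0) ^ lookup \<alpha> j) = t ^ lookup \<alpha> i"
    using i by (simp add: prod.delta)
  have "lookup \<alpha> i \<noteq> 2 * d"
  proof
    assume \<alpha>i: "lookup \<alpha> i = 2 * d"
    have "lookup \<alpha> k = lookup (single i (2 * d)) k" for k
    proof (cases "k < n")
      case True
      then show ?thesis using False \<alpha>i by (cases "k = i") (auto simp: lookup_single)
    next
      case False
      then have "k \<notin> keys \<alpha>" using keys_alpha by auto
      then show ?thesis using False i by (auto simp: in_keys_iff lookup_single)
    qed
    then show False
      using alpha_ne_pure[OF i] poly_mapping_eqI by blast
  qed
  moreover have "lookup \<alpha> i \<le> 2 * d"
    using i mdeg_alpha_le by (simp add: mdeg_alpha_eq_sum member_le_sum order.trans[rotated])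
  ultimately have "t ^ lookup \<alpha> i \<le> t ^ (2 * d - 1)"
    using t by (intro power_increasing) auto
  then show ?thesis using monom t by simp
qed

lemma lower_bound_coeff_nonneg:
  assumes r: "lower_bound n f r" and i: "i < n"
  shows "c i \<ge> 0"
proof (rule ccontr)
  assume "\<not> c i \<ge> 0"
  then obtain t where t: "t \<ge> 1" "c i * t ^ (2 * d) + (\<bar>b\<bar> + \<bar>f0 - r\<bar>) * t ^ (2 * d - 1) < 0"
    using ex_ge_one_leading_term_neg[of "c i" "\<bar>b\<bar> + \<bar>f0 - r\<bar>" "2 * d"] d_pos by auto
  define x where "x = (\<lambda>j. if j = i then t else (0::real))"
  have "(\<Sum>j<n. c j * x j ^ (2 * d)) = (\<Sum>j<n. if j = i then c i * t ^ (2 * d) else 0)"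
    using d_pos by (intro sum.cong) (auto simp: x_def)
  then have "meval f x = f0 + b * (\<Prod>j<n. x j ^ lookup \<alpha> j) + c i * t ^ (2 * d)"
    using i by (simp add: meval_f)
  also have "\<dots> \<le> f0 + \<bar>b\<bar> * t ^ (2 * d - 1) + c i * t ^ (2 * d)"
  proof -
    have "b * (\<Prod>j<n. x j ^ lookup \<alpha> j) \<le> \<bar>b\<bar> * \<bar>\<Prod>j<n. x j ^ lookup \<alpha> j\<bar>"
      by (metis abs_ge_self abs_mult)
    also have "\<dots> \<le> \<bar>b\<bar> * t ^ (2 * d - 1)"
      using monomial_on_axis_le[OF i t(1)] by (intro mult_left_mono) (simp_all add: x_def)
    finally show ?thesis by simp
  qed
  also have "\<dots> < r"
  proof -
    have "1 \<le> t ^ (2 * d - 1)" using t(1) by (rule one_le_power)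
    then have "\<bar>f0 - r\<bar> * 1 \<le> \<bar>f0 - r\<bar> * t ^ (2 * d - 1)"
      by (intro mult_left_mono) auto
    then have "f0 - r \<le> \<bar>f0 - r\<bar> * t ^ (2 * d - 1)"
      by (metis abs_ge_self mult.right_neutral order_trans)
    then show ?thesis using t(2) by (simp add: algebra_simps)
  qed
  finally have "meval f x < r" .
  moreover have "r \<le> meval f x"
    using r i by (auto simp: lower_bound_def x_def)
  ultimately show False by simp
qed

lemma lower_bound_coeff_pos:
  assumes r: "lower_bound n f r" and \<Delta>: alpha_in_Delta and i: "i < n" "lookup \<alpha> i > 0"
  shows "c i > 0"
proof (rule ccontr)
  assume "\<not> c i > 0"
  then have ci: "c i = 0" using lower_bound_coeff_nonneg[OF r i(1)] by simp
  obtain \<epsilon> where \<epsilon>: "\<And>j. \<epsilon> j = 1 \<or> \<epsilon> j = (-1::real)" "b * (\<Prod>j<n. \<epsilon> j ^ lookup \<alpha> j) = - \<bar>b\<bar>"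
    using sign_vector[OF \<Delta>] by blast
  define C where "C = (\<Sum>j<n. c j * (if j = i then 0 else 1))"
  define t where "t = (\<bar>f0 + C - r\<bar> + 1) / \<bar>b\<bar> + 1"
  have b_pos: "\<bar>b\<bar> > 0" using b_nonzero by simp
  have t: "t \<ge> 1" using b_pos by (simp add: t_def)
  define y where "y = (\<lambda>j. if j = i then t else (1::real))"
  have sum_y: "(\<Sum>j<n. c j * y j ^ (2 * d)) = C"
    unfolding C_def by (rule sum.cong) (auto simp: y_def ci)
  have "(\<Prod>j<n. y j ^ lookup \<alpha> j) = (\<Prod>j<n. if j = i then t ^ lookup \<alpha> i else 1)"
    by (rule prod.cong) (auto simp: y_def)
  then have prod_y: "(\<Prod>j<n. y j ^ lookup \<alpha> j) = t ^ lookup \<alpha> i"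
    using i by (simp add: prod.delta)
  have "\<bar>b\<bar> * t \<le> \<bar>b\<bar> * t ^ lookup \<alpha> i"
    using t i(2) power_increasing[of 1 "lookup \<alpha> i" t] by (intro mult_left_mono) auto
  moreover have "\<bar>b\<bar> * t = \<bar>f0 + C - r\<bar> + 1 + \<bar>b\<bar>"
    using b_pos unfolding t_def distrib_left by (simp del: abs_mult_self_eq)
  ultimately have "f0 + C - \<bar>b\<bar> * t ^ lookup \<alpha> i < r" by linarith
  moreover have "r \<le> meval f (\<lambda>j. if j < n then \<epsilon> j * y j else 0)"
    using r by (simp add: lower_bound_def)
  ultimately show False
    using meval_f_signed[OF \<epsilon>, of y] sum_y prod_y by simp
qed

lemma gp_ratio_pos: "apow n A \<alpha> > 0 \<Longrightarrow> gp_ratio A > 0"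
  using alpha_pow_pos b_nonzero d_pos by (simp add: gp_ratio_def)

lemma lower_bound_apow_coeff_pos:
  assumes "lower_bound n f r" alpha_in_Delta
  shows "apow n c \<alpha> > 0"
  unfolding apow_def
proof (intro prod_pos)
  fix j assume "j \<in> {..<n}"
  then show "0 < c j ^ lookup \<alpha> j"
    using lower_bound_coeff_pos[OF assms, of j] by (cases "lookup \<alpha> j = 0") auto
qed

text \<open>The test point \<open>x\<^sub>j = \<epsilon>\<^sub>j (\<alpha>\<^sub>j T / c\<^sub>j)\<^sup>1\<^sup>/\<^sup>2\<^sup>d\<close> balances every pure term: \<open>c\<^sub>j x\<^sub>j\<^sup>2\<^sup>d = \<alpha>\<^sub>j T\<close>.\<close>

lemma lower_bound_test_curve:
  assumes r: "lower_bound n f r" and \<Delta>: alpha_in_Delta and T: "T > 0"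
  obtains Q where "Q \<ge> 0" "Q ^ (2 * d) = real (2 * d) ^ (2 * d) * gp_ratio c * T ^ mdeg \<alpha>"
    "r \<le> f0 + real (mdeg \<alpha>) * T - Q"
proof -
  define y where "y j = (real (lookup \<alpha> j) * T / c j) powr (1 / real (2 * d))" for j
  have y_pow: "c j * y j ^ (2 * d) = real (lookup \<alpha> j) * T" if "j < n" for j
  proof (cases "lookup \<alpha> j = 0")
    case False
    then have "c j > 0" using lower_bound_coeff_pos[OF r \<Delta> that] by simp
    then show ?thesis unfolding y_def using T d_pos by (subst root_powr_power) auto
  qed (use d_pos in \<open>simp add: y_def\<close>)
  define Q where "Q = \<bar>b\<bar> * (\<Prod>j<n. y j ^ lookup \<alpha> j)"
  obtain \<epsilon> where \<epsilon>: "\<And>j. \<epsilon> j = 1 \<or> \<epsilon> j = (-1::real)" "b * (\<Prod>j<n. \<epsilon> j ^ lookup \<alpha> j) = - \<bar>b\<bar>"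
    using sign_vector[OF \<Delta>] by blast
  have "(\<Sum>j<n. c j * y j ^ (2 * d)) = real (mdeg \<alpha>) * T"
    by (simp add: y_pow mdeg_alpha_eq_sum sum_distrib_right)
  moreover have "r \<le> meval f (\<lambda>j. if j < n then \<epsilon> j * y j else 0)"
    using r by (simp add: lower_bound_def)
  ultimately have "r \<le> f0 + real (mdeg \<alpha>) * T - Q"
    using meval_f_signed[OF \<epsilon>, of y] by (simp add: Q_def)
  moreover have "Q \<ge> 0"
    by (simp add: Q_def y_def prod_nonneg)
  moreover have "Q ^ (2 * d) = real (2 * d) ^ (2 * d) * gp_ratio c * T ^ mdeg \<alpha>"
  proof -
    have "apow n c \<alpha> * (\<Prod>j<n. y j ^ lookup \<alpha> j) ^ (2 * d) = (\<Prod>j<n. (c j * y j ^ (2 * d)) ^ lookup \<alpha> j)"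
      by (simp add: apow_def prod_power_distrib power_mult[symmetric] mult.commute power_mult_distrib
          prod.distrib)
    also have "\<dots> = T ^ mdeg \<alpha> * alpha_pow"
      by (simp add: y_pow power_mult_distrib prod.distrib power_sum[symmetric] mdeg_alpha_eq_sum apow_def)
    finally show ?thesis
      using lower_bound_apow_coeff_pos[OF r \<Delta>] d_pos
      by (simp add: Q_def gp_ratio_def power_mult_distrib field_simps)
  qed
  ultimately show ?thesis using that by blast
qed

lemma lower_bound_gp_slack:
  assumes r: "lower_bound n f r" and \<Delta>: alpha_in_Delta and m: "mdeg \<alpha> < 2 * d"
  shows "real (2 * d - mdeg \<alpha>) * gp_ratio c powr (1 / real (2 * d - mdeg \<alpha>)) \<le> f0 - r"
proof -
  define D where "D = 2 * d"
  define T where "T = gp_ratio c powr (1 / real (D - mdeg \<alpha>))"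
  have R: "gp_ratio c > 0"
    using gp_ratio_pos lower_bound_apow_coeff_pos[OF r \<Delta>] by blast
  then have T: "T > 0" by (simp add: T_def)
  have T_pow: "T ^ (D - mdeg \<alpha>) = gp_ratio c"
    unfolding T_def using R m by (intro root_powr_power) (auto simp: D_def)
  obtain Q where Q: "Q \<ge> 0" "Q ^ D = real D ^ D * gp_ratio c * T ^ mdeg \<alpha>" "r \<le> f0 + real (mdeg \<alpha>) * T - Q"
    using lower_bound_test_curve[OF r \<Delta> T] unfolding D_def by blast
  have "T ^ (D - mdeg \<alpha>) * T ^ mdeg \<alpha> = T ^ D"
    using m by (simp add: power_add[symmetric] D_def)
  then have QD: "Q ^ D = (real D * T) ^ D"
    by (simp add: Q(2) T_pow[symmetric] power_mult_distrib mult.assoc)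
  have "Q = real D * T"
  proof (rule power_eq_imp_eq_base[OF QD Q(1)])
    show "0 \<le> real D * T" using T by simp
    show "0 < D" using d_pos by (simp add: D_def)
  qed
  then have "real (D - mdeg \<alpha>) * T \<le> f0 - r"
    using Q(3) m by (simp add: D_def of_nat_diff algebra_simps)
  then show ?thesis by (simp add: T_def D_def)
qed

lemma lower_bound_gp_ratio_le_one:
  assumes r: "lower_bound n f r" and \<Delta>: alpha_in_Delta and m: "mdeg \<alpha> = 2 * d"
  shows "gp_ratio c \<le> 1"
proof (rule ccontr)
  define D where "D = 2 * d"
  define \<theta> where "\<theta> = gp_ratio c powr (1 / real D)"
  assume "\<not> gp_ratio c \<le> 1"
  then have "\<theta> > 1"
    unfolding \<theta>_def using d_pos by (intro gr_one_powr) (auto simp: D_def)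
  define T where "T = (\<bar>f0 - r\<bar> + 1) / (real D * (\<theta> - 1))"
  have T: "T > 0"
    using \<open>\<theta> > 1\<close> d_pos unfolding T_def D_def by (intro divide_pos_pos) auto
  obtain Q where Q: "Q \<ge> 0" "Q ^ D = real D ^ D * gp_ratio c * T ^ D" "r \<le> f0 + real D * T - Q"
    using lower_bound_test_curve[OF r \<Delta> T] unfolding m D_def by blast
  have "\<theta> ^ D = gp_ratio c"
    unfolding \<theta>_def using \<open>\<not> gp_ratio c \<le> 1\<close> d_pos by (intro root_powr_power) (auto simp: D_def)
  then have QD: "Q ^ D = (\<theta> * real D * T) ^ D"
    by (simp add: Q(2) power_mult_distrib)
  have "Q = \<theta> * real D * T"
  proof (rule power_eq_imp_eq_base[OF QD Q(1)])
    show "0 \<le> \<theta> * real D * T" using T \<open>\<theta> > 1\<close> by simp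
    show "0 < D" using d_pos by (simp add: D_def)
  qed
  then have "r \<le> f0 - real D * T * (\<theta> - 1)"
    using Q(3) by (simp add: algebra_simps)
  moreover have "real D * T * (\<theta> - 1) = \<bar>f0 - r\<bar> + 1"
    using \<open>\<theta> > 1\<close> d_pos by (simp add: T_def D_def)
  ultimately show False
    using abs_ge_self[of "f0 - r"] by linarith
qed

lemma gp_feasible_iff_not_Delta:
  assumes "\<not> alpha_in_Delta"
  shows "gp_feasible n d f r \<longleftrightarrow> (\<forall>i<n. 0 \<le> c i) \<and> r \<le> f0"
  using assms unfolding gp_feasible_def Delta_eq by (simp add: c_def f0_def)

lemma gp_feasible_DeltaI:
  assumes alpha_in_Delta
    and "\<forall>i<n. 0 \<le> A i \<and> (A i = 0 \<longleftrightarrow> lookup \<alpha> i = 0)"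
    and "mdeg \<alpha> = 2 * d \<longrightarrow> real (2 * d) ^ (2 * d) * apow n A \<alpha> = \<bar>b\<bar> ^ (2 * d) * alpha_pow"
    and "\<forall>i<n. A i \<le> c i"
    and "(if mdeg \<alpha> < 2 * d then real (2 * d - mdeg \<alpha>) * gp_ratio A powr (1 / real (2 * d - mdeg \<alpha>))
          else 0) \<le> f0 - r"
  shows "gp_feasible n d f r"
  unfolding gp_feasible_def Delta_eq if_P[OF assms(1)] sum_singleton_filter
    c_def[symmetric] f0_def[symmetric] b_def[symmetric] gp_ratio_def[symmetric]
  by (rule exI[of _ "\<lambda>_. A"]) (use assms(2-) in \<open>simp add: b_def\<close>)

lemma gp_feasible_DeltaE:
  assumes "gp_feasible n d f r" alpha_in_Delta
  obtains A where "\<forall>i<n. 0 \<le> A i \<and> (A i = 0 \<longleftrightarrow> lookup \<alpha> i = 0)"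
    and "mdeg \<alpha> = 2 * d \<longrightarrow> real (2 * d) ^ (2 * d) * apow n A \<alpha> = \<bar>b\<bar> ^ (2 * d) * alpha_pow"
    and "\<forall>i<n. A i \<le> c i"
    and "(if mdeg \<alpha> < 2 * d then real (2 * d - mdeg \<alpha>) * gp_ratio A powr (1 / real (2 * d - mdeg \<alpha>))
          else 0) \<le> f0 - r"
  using assms(1) unfolding gp_feasible_def Delta_eq if_P[OF assms(2)] sum_singleton_filter
    c_def[symmetric] f0_def[symmetric] b_def[symmetric] gp_ratio_def[symmetric]
  by (auto simp: b_def)

lemma apow_scaled_coeffs:
  "apow n (\<lambda>j. if lookup \<alpha> j = 0 then 0 else \<theta> * c j) \<alpha> = \<theta> ^ mdeg \<alpha> * apow n c \<alpha>"
proof -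
  have "apow n (\<lambda>j. if lookup \<alpha> j = 0 then 0 else \<theta> * c j) \<alpha> = (\<Prod>j<n. \<theta> ^ lookup \<alpha> j * c j ^ lookup \<alpha> j)"
    unfolding apow_def by (rule prod.cong) (auto simp: power_mult_distrib)
  then show ?thesis
    by (simp add: prod.distrib power_sum[symmetric] mdeg_alpha_eq_sum apow_def)
qed

lemma gp_feasible_of_lower_bound_Delta:
  assumes r: "lower_bound n f r" and \<Delta>: alpha_in_Delta
  shows "gp_feasible n d f r"
proof -
  have R: "gp_ratio c > 0"
    using gp_ratio_pos lower_bound_apow_coeff_pos[OF r \<Delta>] by blast
  \<comment> \<open>Scale the pure coefficients by \<open>\<theta> \<le> 1\<close> so that \<open>gp_ratio\<close> becomes \<open>1\<close> in top degree.\<close>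
  define \<theta> where "\<theta> = (if mdeg \<alpha> = 2 * d then gp_ratio c powr (1 / real (2 * d)) else 1)"
  define A where "A j = (if lookup \<alpha> j = 0 then 0 else \<theta> * c j)" for j
  have \<theta>: "0 < \<theta>" "\<theta> \<le> 1"
    using R lower_bound_gp_ratio_le_one[OF r \<Delta>] by (auto simp: \<theta>_def powr_le1)
  have apow_A: "apow n A \<alpha> = \<theta> ^ mdeg \<alpha> * apow n c \<alpha>"
    unfolding A_def by (rule apow_scaled_coeffs)
  show ?thesis
  proof (rule gp_feasible_DeltaI[OF \<Delta>])
    show "\<forall>i<n. 0 \<le> A i \<and> (A i = 0 \<longleftrightarrow> lookup \<alpha> i = 0)"
    proof (intro allI impI)
      fix i assume "i < n"
      then show "0 \<le> A i \<and> (A i = 0 \<longleftrightarrow> lookup \<alpha> i = 0)"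
        using \<theta> lower_bound_coeff_pos[OF r \<Delta>, of i] by (cases "lookup \<alpha> i = 0") (auto simp: A_def)
    qed
    show "\<forall>i<n. A i \<le> c i"
      using \<theta> lower_bound_coeff_nonneg[OF r] by (auto simp: A_def mult_left_le_one_le)
    have "\<theta> ^ (2 * d) = gp_ratio c" if "mdeg \<alpha> = 2 * d"
      using that R d_pos root_powr_power[of "gp_ratio c" "2 * d"] by (simp add: \<theta>_def)
    then show "mdeg \<alpha> = 2 * d \<longrightarrow> real (2 * d) ^ (2 * d) * apow n A \<alpha> = \<bar>b\<bar> ^ (2 * d) * alpha_pow"
      using lower_bound_apow_coeff_pos[OF r \<Delta>] d_pos by (auto simp: apow_A gp_ratio_def)
    show "(if mdeg \<alpha> < 2 * d then real (2 * d - mdeg \<alpha>) * gp_ratio A powr (1 / real (2 * d - mdeg \<alpha>))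
          else 0) \<le> f0 - r"
      using lower_bound_gp_slack[OF r \<Delta>] lower_bound_le_f0[OF r]
      by (simp add: apow_A \<theta>_def gp_ratio_def)
  qed
qed

lemma gp_feasible_of_lower_bound:
  assumes r: "lower_bound n f r"
  shows "gp_feasible n d f r"
  using lower_bound_le_f0[OF r] lower_bound_coeff_nonneg[OF r] gp_feasible_of_lower_bound_Delta[OF r]
  by (cases alpha_in_Delta) (simp_all add: gp_feasible_iff_not_Delta)

lemma sos_of_gp_feasible_not_Delta:
  assumes gp: "gp_feasible n d f r" and \<Delta>: "\<not> alpha_in_Delta"
  shows "is_sos n (f - mconst r)"
proof -
  have coeffs: "\<forall>i<n. 0 \<le> c i" "r \<le> f0"
    using gp gp_feasible_iff_not_Delta[OF \<Delta>] by auto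
  have "b > 0" and even: "even (lookup \<alpha> j)" for j
    using \<Delta> b_nonzero by (auto simp: alpha_in_Delta_def)
  define M where "M = (\<Prod>i<n. mvar i ^ (lookup \<alpha> i div 2))"
  have "(\<Prod>i<n. mvar i ^ lookup \<alpha> i) = (\<Prod>i<n. mvar i ^ (lookup \<alpha> i div 2) * mvar i ^ (lookup \<alpha> i div 2))"
  proof (intro prod.cong)
    show "mvar i ^ lookup \<alpha> i = mvar i ^ (lookup \<alpha> i div 2) * mvar i ^ (lookup \<alpha> i div 2)" for i
      using even[of i] by (auto elim!: evenE simp: mult_2 simp flip: power_add)
  qed simp
  then have "f - mconst r = mconst (f0 - r) + mconst b * (M * M) + (\<Sum>i<n. mconst (c i) * mvar i ^ (2 * d))"
    by (subst f_eq_mvars) (simp add: M_def prod.distrib mconst_diff[symmetric] algebra_simps)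
  moreover have "in_vars n M"
    unfolding M_def by (intro in_vars_prod in_vars_power in_vars_mvar) auto
  ultimately show ?thesis
    using coeffs \<open>b > 0\<close>
    by (auto intro!: is_sos_add is_sos_mconst is_sos_mconst_mult is_sos_square is_sos_sum
        is_sos_mconst_mult_even_power in_vars_mvar)
qed

lemma apow_pos_if_support:
  assumes "\<forall>i<n. 0 \<le> A i \<and> (A i = 0 \<longleftrightarrow> lookup \<alpha> i = 0)"
  shows "apow n A \<alpha> > 0"
  unfolding apow_def
proof (intro prod_pos)
  fix j assume "j \<in> {..<n}"
  then have "lookup \<alpha> j \<noteq> 0 \<Longrightarrow> A j > 0"
    using assms by force
  then show "0 < A j ^ lookup \<alpha> j"
    by (cases "lookup \<alpha> j = 0") simp_all
qed

lemma weight_roots: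
  assumes A: "\<forall>i<n. 0 \<le> A i \<and> (A i = 0 \<longleftrightarrow> lookup \<alpha> i = 0)"
  obtains \<mu> where "\<forall>i. \<mu> i \<ge> 0" "\<forall>i<n. real (lookup \<alpha> i) * \<mu> i ^ (2 * d) = A i"
    "(\<Prod>i<n. \<mu> i ^ lookup \<alpha> i) ^ (2 * d) = apow n A \<alpha> / alpha_pow"
proof -
  define \<mu> where "\<mu> i = (A i / real (lookup \<alpha> i)) powr (1 / real (2 * d))" for i
  have \<mu>_pow: "\<mu> i ^ (2 * d) = A i / real (lookup \<alpha> i)" if "i < n" for i
    unfolding \<mu>_def using d_pos A that by (intro root_powr_power) auto
  have "\<forall>i<n. real (lookup \<alpha> i) * \<mu> i ^ (2 * d) = A i"
    using A by (auto simp: \<mu>_pow)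
  moreover have "(\<Prod>i<n. \<mu> i ^ lookup \<alpha> i) ^ (2 * d) = (\<Prod>i<n. (\<mu> i ^ (2 * d)) ^ lookup \<alpha> i)"
    by (simp add: prod_power_distrib power_mult[symmetric] mult.commute)
  moreover have "\<dots> = (\<Prod>i<n. (A i / real (lookup \<alpha> i)) ^ lookup \<alpha> i)"
    by (rule prod.cong) (simp_all add: \<mu>_pow)
  ultimately show ?thesis
    using that[of \<mu>] by (simp add: \<mu>_def power_divide prod_dividef apow_def)
qed

text \<open>The constant \<open>s0\<close> plays the extra variable of the AM-GM inequality, carrying the weight
  \<open>2d - |\<alpha>|\<close>.\<close>

lemma gp_certificate_scalars_abs:
  assumes gp: "gp_feasible n d f r" and \<Delta>: alpha_in_Delta
  obtains A \<mu> s0 where "\<forall>i<n. 0 \<le> A i \<and> A i \<le> c i"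
    and "\<forall>i<n. real (lookup \<alpha> i) * \<mu> i ^ (2 * d) = A i"
    and "real (2 * d) * s0 ^ (2 * d - mdeg \<alpha>) * (\<Prod>i<n. \<mu> i ^ lookup \<alpha> i) = \<bar>b\<bar>"
    and "real (2 * d - mdeg \<alpha>) * s0 ^ (2 * d) \<le> f0 - r"
proof -
  define D where "D = 2 * d"
  define k where "k = D - mdeg \<alpha>"
  have D: "D > 0" using d_pos by (simp add: D_def)
  obtain A where A: "\<forall>i<n. 0 \<le> A i \<and> (A i = 0 \<longleftrightarrow> lookup \<alpha> i = 0)"
    and eq: "mdeg \<alpha> = D \<longrightarrow> real D ^ D * apow n A \<alpha> = \<bar>b\<bar> ^ D * alpha_pow"
    and le: "\<forall>i<n. A i \<le> c i"
    and slack: "(if mdeg \<alpha> < D then real k * gp_ratio A powr (1 / real k) else 0) \<le> f0 - r"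
    using gp_feasible_DeltaE[OF gp \<Delta>] unfolding D_def k_def by blast
  obtain \<mu> where \<mu>: "\<forall>i. \<mu> i \<ge> 0" "\<forall>i<n. real (lookup \<alpha> i) * \<mu> i ^ D = A i"
    and P_pow: "(\<Prod>i<n. \<mu> i ^ lookup \<alpha> i) ^ D = apow n A \<alpha> / alpha_pow"
    using weight_roots[OF A] unfolding D_def by blast
  define P where "P = (\<Prod>i<n. \<mu> i ^ lookup \<alpha> i)"
  obtain s0 where s0: "s0 \<ge> 0" and s0_pow: "s0 ^ D = (if mdeg \<alpha> < D then gp_ratio A powr (1 / real k) else 1)"
    and s0_k: "(s0 ^ k) ^ D = (if mdeg \<alpha> < D then gp_ratio A else 1)"
  proof (cases "mdeg \<alpha> < D")
    case True
    then show ?thesis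
      using root_powr_pair[OF gp_ratio_pos[OF apow_pos_if_support[OF A]] _ D, of k] that
      by (auto simp: k_def)
  qed (use that[of 1] in simp)
  have "(real D * s0 ^ k * P) ^ D = \<bar>b\<bar> ^ D"
  proof (cases "mdeg \<alpha> < D")
    case True
    then show ?thesis
      using apow_pos_if_support[OF A] alpha_pow_pos
      by (simp add: power_mult_distrib s0_k P_pow P_def gp_ratio_def flip: D_def)
  next
    case False
    then have "mdeg \<alpha> = D"
      using mdeg_alpha_le by (simp add: D_def)
    then show ?thesis
      using eq alpha_pow_pos by (simp add: power_mult_distrib s0_k P_pow P_def field_simps)
  qed
  moreover have "P \<ge> 0"
    unfolding P_def using \<mu>(1) by (auto intro: prod_nonneg)
  ultimately have "real D * s0 ^ k * P = \<bar>b\<bar>"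
    using s0 by (intro power_eq_imp_eq_base[OF _ _ abs_ge_zero D]) simp_all
  moreover have "real k * s0 ^ D \<le> f0 - r"
    using slack by (cases "mdeg \<alpha> < D") (simp_all add: s0_pow k_def)
  ultimately show ?thesis
    using that[of A \<mu> s0] A le \<mu>(2) by (simp add: P_def D_def k_def)
qed

lemma gp_certificate_scalars:
  assumes gp: "gp_feasible n d f r" and \<Delta>: alpha_in_Delta
  obtains A s s0 where "\<forall>i<n. 0 \<le> A i \<and> A i \<le> c i"
    and "\<forall>i<n. real (lookup \<alpha> i) * s i ^ (2 * d) = A i"
    and "real (2 * d) * s0 ^ (2 * d - mdeg \<alpha>) * (\<Prod>i<n. s i ^ lookup \<alpha> i) = - b"
    and "real (2 * d - mdeg \<alpha>) * s0 ^ (2 * d) \<le> f0 - r"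
proof -
  obtain A \<mu> s0 where A: "\<forall>i<n. 0 \<le> A i \<and> A i \<le> c i"
    and \<mu>: "\<forall>i<n. real (lookup \<alpha> i) * \<mu> i ^ (2 * d) = A i"
    and abs_b: "real (2 * d) * s0 ^ (2 * d - mdeg \<alpha>) * (\<Prod>i<n. \<mu> i ^ lookup \<alpha> i) = \<bar>b\<bar>"
    and slack: "real (2 * d - mdeg \<alpha>) * s0 ^ (2 * d) \<le> f0 - r"
    using gp_certificate_scalars_abs[OF gp \<Delta>] by blast
  obtain \<epsilon> where \<epsilon>: "\<And>j. \<epsilon> j = 1 \<or> \<epsilon> j = (-1::real)" and b\<epsilon>: "b * (\<Prod>j<n. \<epsilon> j ^ lookup \<alpha> j) = - \<bar>b\<bar>"
    using sign_vector[OF \<Delta>] by blast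
  define E where "E = (\<Prod>j<n. \<epsilon> j ^ lookup \<alpha> j)"
  have \<epsilon>_sq: "\<epsilon> j * \<epsilon> j = 1" for j
    using \<epsilon>[of j] by auto
  then have "E * E = 1"
    by (simp add: E_def prod.distrib[symmetric] power_mult_distrib[symmetric])
  then have "b = (b * E) * E"
    by (simp add: mult.assoc)
  then have minus_b: "- b = E * \<bar>b\<bar>"
    using b\<epsilon> by (simp add: E_def mult.commute)
  show ?thesis
  proof (rule that[of A "\<lambda>i. \<epsilon> i * \<mu> i" s0])
    have "\<epsilon> i ^ (2 * d) = 1" for i
      by (simp add: power_mult power2_eq_square \<epsilon>_sq)
    then have "(\<epsilon> i * \<mu> i) ^ (2 * d) = \<mu> i ^ (2 * d)" for i
      by (simp add: power_mult_distrib)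
    then show "\<forall>i<n. real (lookup \<alpha> i) * (\<epsilon> i * \<mu> i) ^ (2 * d) = A i"
      using \<mu> by simp
    have "(\<Prod>i<n. (\<epsilon> i * \<mu> i) ^ lookup \<alpha> i) = E * (\<Prod>i<n. \<mu> i ^ lookup \<alpha> i)"
      by (simp add: E_def power_mult_distrib prod.distrib)
    then show "real (2 * d) * s0 ^ (2 * d - mdeg \<alpha>) * (\<Prod>i<n. (\<epsilon> i * \<mu> i) ^ lookup \<alpha> i) = - b"
      unfolding minus_b abs_b[symmetric] by (simp only: mult_ac)
  qed (use A slack in auto)
qed

lemma sos_of_gp_feasible_Delta:
  assumes gp: "gp_feasible n d f r" and \<Delta>: alpha_in_Delta
  shows "is_sos n (f - mconst r)"
proof -
  obtain A s s0 where A: "\<forall>i<n. 0 \<le> A i \<and> A i \<le> c i"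
    and s: "\<forall>i<n. real (lookup \<alpha> i) * s i ^ (2 * d) = A i"
    and b: "real (2 * d) * s0 ^ (2 * d - mdeg \<alpha>) * (\<Prod>i<n. s i ^ lookup \<alpha> i) = - b"
    and slack: "real (2 * d - mdeg \<alpha>) * s0 ^ (2 * d) \<le> f0 - r"
    using gp_certificate_scalars[OF gp \<Delta>] by blast
  define t where "t = (\<lambda>i. if i < n then mconst (s i) * mvar i else mconst s0)"
  define g where "g = (\<lambda>i. if i < n then lookup \<alpha> i else 2 * d - mdeg \<alpha>)"
  have "amgm_gap {..n} g t (2 * d) =
      (\<Sum>i<n. mconst (A i) * mvar i ^ (2 * d)) + mconst (real (2 * d - mdeg \<alpha>) * s0 ^ (2 * d))
      + mconst b * (\<Prod>i<n. mvar i ^ lookup \<alpha> i)"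
    unfolding t_def g_def amgm_gap_scaled_vars b
    by (simp add: s mconst_def single_uminus)
  then have f_eq: "f - mconst r = amgm_gap {..n} g t (2 * d) + (\<Sum>i<n. mconst (c i - A i) * mvar i ^ (2 * d))
      + mconst (f0 - r - real (2 * d - mdeg \<alpha>) * s0 ^ (2 * d))"
    by (subst f_eq_mvars) (simp add: mconst_diff[symmetric] left_diff_distrib sum_subtractf algebra_simps,
        simp add: mconst_add)
  have "sum g {..n} = 2 * d"
    using mdeg_alpha_le by (simp add: g_def lessThan_Suc_atMost[symmetric] mdeg_alpha_eq_sum[symmetric])
  moreover have "in_vars n (t i)" for i
    by (auto simp: t_def intro: in_vars_mult in_vars_mvar)
  ultimately show ?thesis
    unfolding f_eq using A slack
    by (intro is_sos_add is_sos_amgm_gap is_sos_sum is_sos_mconst_mult_even_power is_sos_mconst in_vars_mvar)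
      auto
qed

end

theorem mainTheorem5:
  fixes n d :: nat and f :: mpoly
  assumes "in_vars n f"
    and "total_degree f = 2 * d"
    and "d \<ge> 1"
    and "card (Omega n d f) = 1"
  shows "f_star n f = f_sos n f \<and> f_sos n f = f_gp n d f"
proof -
  obtain \<alpha> where "Omega n d f = {\<alpha>}"
    using assms(4) by (meson card_1_singletonE)
  then interpret single_term_poly n d f \<alpha>
    using assms by unfold_locales
  have "f_gp n d f \<le> f_sos n f"
    unfolding f_gp_def f_sos_def
    using sos_of_gp_feasible_Delta sos_of_gp_feasible_not_Delta
    by (intro Sup_subset_mono image_mono) blast
  moreover have "f_star n f \<le> f_gp n d f"
    unfolding f_gp_def using gp_feasible_of_lower_bound
    by (intro f_star_le_if_lower_bounds Sup_upper) auto
  ultimately show ?thesis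
    using f_sos_le_f_star[of n f] by (meson order.antisym order.trans)
qed

end
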